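(* For integers $n\ge j\ge 1$, \[ \sum_{k=j}^{n}\genfrac{[}{]}{0pt}{}{n+1}{k+1}\genfrac{\{}{\}}{0pt}{}{k}{j}\,k=\binom{n+1}{j}\frac{n!}{(j-1)!}\left(H_{n+1}-H_{j}\right). \]
   Context: $\genfrac{\{}{\}}{0pt}{}{n}{k}$ denotes the Stirling numbers of the second kind, $\genfrac{[}{]}{0pt}{}{n}{k}$ the unsigned Stirling numbers of the first kind, and $H_n=\sum_{i=1}^n 1/i$ the harmonic numbers. *)

theory Defs
  imports "HOL-Analysis.Analysis" "HOL-Combinatorics.Stirling"
begin

end

theory Submission
  imports Defs
begin

text \<open>
  Put \<open>A(n,j) = \<Sum>\<^sub>k [n+1,k+1] {k,j}\<close> and \<open>B(n,j) = \<Sum>\<^sub>k [n+1,k+1] {k,j} k\<close>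
  (\<open>mixed_stirling_sum\<close> and \<open>mixed_stirling_moment\<close> below). Expanding
  \<open>[n+2,k+1] = (n+1) [n+1,k+1] + [n+1,k]\<close>, shifting \<open>k\<close>, and then expanding
  \<open>{k+1,j+1} = (j+1) {k,j+1} + {k,j}\<close> gives recurrences in \<open>n\<close> for \<open>A\<close> and \<open>B\<close>,
  the one for \<open>B\<close> having \<open>A\<close> as inhomogeneous part. Induction on \<open>n\<close> then yields
  \<open>A(n,j) = C(n,j) n!/j!\<close> and \<open>B(n,i+1) = C(n+1,i+1) n!/i! (H\<^sub>n\<^sub>+\<^sub>1 - H\<^sub>i\<^sub>+\<^sub>1)\<close>.
\<close>

lemma Suc_times_binomial_Suc_add:
  "Suc k * (m choose Suc k) + k * (m choose k) = m * (m choose k)"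
proof (cases "k \<le> m")
  case True
  have "Suc k * (m choose Suc k) = (m - k) * (m choose k)"
    by (simp only: binomial_absorption binomial_absorb_comp)
  with True show ?thesis
    by (simp add: add_mult_distrib[symmetric])
next
  case False
  then show ?thesis by (simp add: binomial_eq_0)
qed

lemma sum_stirling_Suc_Suc_shift:
  fixes f :: "nat \<Rightarrow> nat"
  shows "(\<Sum>k\<le>Suc n. stirling (Suc (Suc n)) (Suc k) * f k)
       = Suc n * (\<Sum>k\<le>n. stirling (Suc n) (Suc k) * f k)
         + (\<Sum>k\<le>n. stirling (Suc n) (Suc k) * f (Suc k))"
proof -
  have "(\<Sum>k\<le>Suc n. stirling (Suc (Suc n)) (Suc k) * f k)
      = Suc n * (\<Sum>k\<le>Suc n. stirling (Suc n) (Suc k) * f k)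
        + (\<Sum>k\<le>Suc n. stirling (Suc n) k * f k)"
    by (simp only: stirling.simps(4) sum.distrib sum_distrib_left algebra_simps)
  also have "(\<Sum>k\<le>Suc n. stirling (Suc n) (Suc k) * f k)
      = (\<Sum>k\<le>n. stirling (Suc n) (Suc k) * f k)"
    by (simp del: stirling.simps)
  also have "(\<Sum>k\<le>Suc n. stirling (Suc n) k * f k)
      = (\<Sum>k\<le>n. stirling (Suc n) (Suc k) * f (Suc k))"
    by (subst sum.atMost_Suc_shift) (simp del: stirling.simps)
  finally show ?thesis .
qed

definition mixed_stirling_sum :: "nat \<Rightarrow> nat \<Rightarrow> nat" where
  "mixed_stirling_sum n j = (\<Sum>k\<le>n. stirling (Suc n) (Suc k) * Stirling k j)"

definition mixed_stirling_moment :: "nat \<Rightarrow> nat \<Rightarrow> nat" where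
  "mixed_stirling_moment n j = (\<Sum>k\<le>n. stirling (Suc n) (Suc k) * Stirling k j * k)"

lemma Stirling_0_right: "Stirling k 0 = (if k = 0 then 1 else 0)"
  by (cases k) simp_all

lemma mixed_stirling_sum_0: "mixed_stirling_sum n 0 = fact n"
proof -
  have "mixed_stirling_sum n 0 = (\<Sum>k\<le>n. if k = 0 then stirling (Suc n) (Suc k) else 0)"
    unfolding mixed_stirling_sum_def by (intro sum.cong) (simp_all add: Stirling_0_right)
  then show ?thesis by (simp del: stirling.simps add: stirling_Suc_n_1)
qed

lemma mixed_stirling_sum_Suc_Suc:
  "mixed_stirling_sum (Suc n) (Suc i)
     = (n + 2 + i) * mixed_stirling_sum n (Suc i) + mixed_stirling_sum n i"
proof -
  have "mixed_stirling_sum (Suc n) (Suc i)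
      = Suc n * mixed_stirling_sum n (Suc i)
        + (\<Sum>k\<le>n. stirling (Suc n) (Suc k) * Stirling (Suc k) (Suc i))"
    unfolding mixed_stirling_sum_def by (rule sum_stirling_Suc_Suc_shift)
  also have "(\<Sum>k\<le>n. stirling (Suc n) (Suc k) * Stirling (Suc k) (Suc i))
      = Suc i * mixed_stirling_sum n (Suc i) + mixed_stirling_sum n i"
    unfolding mixed_stirling_sum_def
    by (simp del: stirling.simps add: sum.distrib sum_distrib_left algebra_simps)
  finally show ?thesis by (simp add: algebra_simps)
qed

lemma mixed_stirling_moment_0: "mixed_stirling_moment n 0 = 0"
  by (simp add: mixed_stirling_moment_def Stirling_0_right)

lemma mixed_stirling_moment_Suc_Suc:
  "mixed_stirling_moment (Suc n) (Suc i)
     = (n + 2 + i) * mixed_stirling_moment n (Suc i) + mixed_stirling_moment n i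
       + Suc i * mixed_stirling_sum n (Suc i) + mixed_stirling_sum n i"
proof -
  have "mixed_stirling_moment (Suc n) (Suc i)
      = Suc n * mixed_stirling_moment n (Suc i)
        + (\<Sum>k\<le>n. stirling (Suc n) (Suc k) * (Stirling (Suc k) (Suc i) * Suc k))"
    unfolding mixed_stirling_moment_def
    using sum_stirling_Suc_Suc_shift[of n "\<lambda>k. Stirling k (Suc i) * k"]
    by (simp only: mult.assoc)
  also have "(\<Sum>k\<le>n. stirling (Suc n) (Suc k) * (Stirling (Suc k) (Suc i) * Suc k))
      = Suc i * mixed_stirling_moment n (Suc i) + mixed_stirling_moment n i
        + Suc i * mixed_stirling_sum n (Suc i) + mixed_stirling_sum n i"
    unfolding mixed_stirling_moment_def mixed_stirling_sum_def
    by (simp del: stirling.simps add: sum.distrib sum_distrib_left algebra_simps)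
  finally show ?thesis by (simp add: algebra_simps)
qed

lemma mixed_stirling_sum_closed_form:
  "mixed_stirling_sum n j * fact j = (n choose j) * fact n"
proof (induction n arbitrary: j)
  case 0
  then show ?case by (cases j) (simp_all add: mixed_stirling_sum_def)
next
  case (Suc n)
  show ?case
  proof (cases j)
    case 0
    then show ?thesis by (simp add: mixed_stirling_sum_0)
  next
    case (Suc i)
    have "mixed_stirling_sum (Suc n) (Suc i) * fact (Suc i)
        = (n + 2 + i) * (mixed_stirling_sum n (Suc i) * fact (Suc i))
          + Suc i * (mixed_stirling_sum n i * fact i)"
      by (simp add: mixed_stirling_sum_Suc_Suc fact_Suc algebra_simps)
    also have "\<dots> = ((n + 2 + i) * (n choose Suc i) + Suc i * (n choose i)) * fact n"
      by (simp only: Suc.IH) (simp add: algebra_simps)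
    also have "(n + 2 + i) * (n choose Suc i) + Suc i * (n choose i) = Suc n * (Suc n choose Suc i)"
      using Suc_times_binomial_Suc_add[of i n] by (simp add: algebra_simps)
    also have "Suc n * (Suc n choose Suc i) * fact n = (Suc n choose Suc i) * fact (Suc n)"
      by (simp add: fact_Suc algebra_simps del: binomial_Suc_Suc)
    finally show ?thesis using Suc by simp
  qed
qed

lemma mixed_stirling_moment_closed_form:
  "real (mixed_stirling_moment n (Suc i)) * fact i
     = real (Suc n choose Suc i) * fact n * (harm (Suc n) - harm (Suc i))"
proof (induction n arbitrary: i)
  case 0
  then show ?case by (cases i) (simp_all add: mixed_stirling_moment_def)
next
  case (Suc n)
  define D :: real where "D = harm (Suc n) - harm (Suc i)"
  define c1 where "c1 = real (Suc n choose Suc i)"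
  define c0 where "c0 = real (Suc n choose i)"
  have moment_Suc_i: "real (mixed_stirling_moment n (Suc i)) * fact i = c1 * fact n * D"
    unfolding c1_def D_def by (rule Suc.IH)
  have moment_i: "real (mixed_stirling_moment n i) * fact i
      = real i * c0 * fact n * (D + 1 / (real i + 1))"
  proof (cases i)
    case 0
    then show ?thesis by (simp add: mixed_stirling_moment_0)
  next
    case (Suc m)
    have "harm (Suc n) - harm (Suc m) = D + 1 / (real i + 1)"
      unfolding D_def Suc by (simp add: harm_Suc inverse_eq_divide)
    then have "real (mixed_stirling_moment n (Suc m)) * fact m = c0 * fact n * (D + 1 / (real i + 1))"
      unfolding c0_def Suc by (simp only: Suc.IH)
    then show ?thesis
      by (simp add: Suc fact_Suc)
  qed
  have sums: "real (Suc i * mixed_stirling_sum n (Suc i) + mixed_stirling_sum n i) * fact i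
      = c1 * fact n"
  proof -
    have "Suc i * mixed_stirling_sum n (Suc i) * fact i + mixed_stirling_sum n i * fact i
        = (Suc n choose Suc i) * fact n"
      using mixed_stirling_sum_closed_form[of n "Suc i"] mixed_stirling_sum_closed_form[of n i]
      by (simp add: fact_Suc algebra_simps)
    then show ?thesis
      unfolding c1_def by (metis (mono_tags) add_mult_distrib of_nat_fact of_nat_mult)
  qed
  have binomial_relation: "(real i + 1) * c1 + real i * c0 = (real n + 1) * c0"
    using Suc_times_binomial_Suc_add[of i "Suc n"] unfolding c0_def c1_def
    by (metis add.commute of_nat_Suc of_nat_add of_nat_mult)
  have "real (mixed_stirling_moment (Suc n) (Suc i)) * fact i
      = (real n + 2 + real i) * (real (mixed_stirling_moment n (Suc i)) * fact i)
        + real (mixed_stirling_moment n i) * fact i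
        + real (Suc i * mixed_stirling_sum n (Suc i) + mixed_stirling_sum n i) * fact i"
    by (simp add: mixed_stirling_moment_Suc_Suc algebra_simps)
  also have "\<dots> = fact n * ((real n + 2 + real i) * c1 * D
                              + real i * c0 * (D + 1 / (real i + 1)) + c1)"
    unfolding moment_Suc_i moment_i sums by (simp add: algebra_simps)
  also have "(real n + 2 + real i) * c1 * D + real i * c0 * (D + 1 / (real i + 1)) + c1
      = (c1 + c0) * (real n + 1) * (D + 1 / (real n + 2))"
  proof -
    \<comment> \<open>With the reciprocals entering only through these identities, this is ideal membership.\<close>
    have "(real i + 1) * (1 / (real i + 1)) = 1" "(real n + 2) * (1 / (real n + 2)) = 1"
      by auto
    then show ?thesis using binomial_relation by algebra
  qed
  also have "fact n * ((c1 + c0) * (real n + 1) * (D + 1 / (real n + 2)))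
      = real (Suc (Suc n) choose Suc i) * fact (Suc n) * (harm (Suc (Suc n)) - harm (Suc i))"
    unfolding c0_def c1_def D_def by (simp add: harm_Suc fact_Suc inverse_eq_divide algebra_simps)
  finally show ?case .
qed

theorem theorem3:
  fixes n j :: nat
  assumes "1 \<le> j" and "j \<le> n"
  shows "(\<Sum>k=j..n. real (stirling (n+1) (k+1)) * real (Stirling k j) * real k)
         = real ((n+1) choose j) * (fact n / fact (j-1)) * (harm (n+1) - harm j)"
proof -
  obtain i where j: "j = Suc i"
    using assms(1) by (cases j) auto
  have "(\<Sum>k=j..n. real (stirling (n+1) (k+1)) * real (Stirling k j) * real k)
      = (\<Sum>k\<le>n. real (stirling (n+1) (k+1)) * real (Stirling k j) * real k)"
    by (rule sum.mono_neutral_left) auto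
  also have "\<dots> = real (mixed_stirling_moment n j)"
    by (simp del: stirling.simps Stirling.simps add: mixed_stirling_moment_def)
  also have "\<dots> = real ((n+1) choose j) * (fact n / fact (j-1)) * (harm (n+1) - harm j)"
    using mixed_stirling_moment_closed_form[of n i] by (simp add: j field_simps)
  finally show ?thesis .
qed

end
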